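(* Let $n\ge2$, let $\mathbf{A}=(a_{ij})$ be an $n\times n$ matrix over a field, let $t=\lfloor n/2\rfloor+1$, and assume $a_{it}\ne0$ for all $i\in[n]$. Let $\mathbf{A}|_t$ be the matrix with $(i,j)$ entry $a_{ij}/a_{it}$. Then $\mathrm{per}(\mathbf{A})=\big(\prod_{i=1}^n a_{it}\big)\,\mathrm{per}(\mathbf{A}|_t)$, and the following procedure computes $\mathrm{per}(\mathbf{A})$: (i) compute the $n(n-1)$ entries $a_{ij}/a_{it}$, $j\neq t$; (ii) compute the sum-product flow on $\mathcal{T}_n(\mathbf{A}|_t)$, where one multiplication is performed for each edge not leaving the root and not entering layer $V_t$ (edges into $V_t$ have label $1$), and $|E|-|V|+1$ additions are performed; (iii) multiply $\mu(\mathrm{toor})$ by $a_{1t},\dots,a_{nt}$ one at a time. The total number of multiplications/divisions used is exactly $$n2^{n-1}-\left\lceil \tfrac n2\right\rceil\binom{n}{\lfloor n/2\rfloor}+n^2-n,$$ and the number of additions is exactly $(n-2)2^{n-1}+1$.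
   Context: $\mathrm{per}(\mathbf{A})=\sum_{\boldsymbol\sigma\in\mathbb{S}_n}\prod_{i=1}^n a_{i\sigma_i}$. The canonical permutation trellis $\mathcal{T}_n$ has layers $V_j$ = all $j$-subsets of $[n]$, an edge $(u,v)\in V_{j-1}\times V_j$ iff $u\subset v$, labeled by the $i$ with $v\setminus u=\{i\}$; $\mathcal{T}_n(\mathbf{B})$ relabels the edge from $V_{j-1}$ to $V_j$ with label $i$ by $b_{ij}$. The sum-product flow: $\mu(\mathrm{root})=1$, $\mu(v)=\sum_{(u,v)\in E}L(u,v)\mu(u)$; then $\mu(\mathrm{toor})=\mathrm{per}(\mathbf{B})$ on $\mathcal{T}_n(\mathbf{B})$. In $\mathcal{T}_n$, $|V|=2^n$, $|E|=n2^{n-1}$, and the number of edges from $V_{t-1}$ to $V_t$ is $(n-t+1)\binom{n}{t-1}$. *)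

theory Defs
  imports Complex_Main "HOL-Combinatorics.Permutations"
begin

text \<open>Matrices are functions nat => nat => 'a, rows and columns indexed by 1..n.\<close>

definition per :: "nat \<Rightarrow> (nat \<Rightarrow> nat \<Rightarrow> 'a::comm_ring_1) \<Rightarrow> 'a" where
  "per n A = (\<Sum>\<sigma> | \<sigma> permutes {1..n}. \<Prod>i=1..n. A i (\<sigma> i))"

definition col_normalize :: "(nat \<Rightarrow> nat \<Rightarrow> 'a::field) \<Rightarrow> nat \<Rightarrow> (nat \<Rightarrow> nat \<Rightarrow> 'a)" where
  "col_normalize A t = (\<lambda>i j. A i j / A i t)"

definition trellis_vertices :: "nat \<Rightarrow> nat set set" where
  "trellis_vertices n = {S. S \<subseteq> {1..n}}"

definition trellis_layer :: "nat \<Rightarrow> nat \<Rightarrow> nat set set" where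
  "trellis_layer n j = {S. S \<subseteq> {1..n} \<and> card S = j}"

definition trellis_edges :: "nat \<Rightarrow> (nat set \<times> nat set) set" where
  "trellis_edges n = {(u, v). u \<subseteq> {1..n} \<and> v \<subseteq> {1..n} \<and> u \<subset> v \<and> card v = Suc (card u)}"

definition edge_index :: "nat set \<times> nat set \<Rightarrow> nat" where
  "edge_index e = the_elem (snd e - fst e)"

definition trellis_label :: "(nat \<Rightarrow> nat \<Rightarrow> 'a) \<Rightarrow> nat set \<times> nat set \<Rightarrow> 'a" where
  "trellis_label B e = B (edge_index e) (card (snd e))"

fun flow_at :: "nat \<Rightarrow> (nat \<Rightarrow> nat \<Rightarrow> 'a::comm_ring_1) \<Rightarrow> nat \<Rightarrow> nat set \<Rightarrow> 'a" where
  "flow_at n B 0 v = (if v = {} then 1 else 0)"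
| "flow_at n B (Suc j) v =
     (\<Sum>e \<in> {e \<in> trellis_edges n. snd e = v}. trellis_label B e * flow_at n B j (fst e))"

definition mu :: "nat \<Rightarrow> (nat \<Rightarrow> nat \<Rightarrow> 'a::comm_ring_1) \<Rightarrow> nat set \<Rightarrow> 'a" where
  "mu n B v = flow_at n B (card v) v"

text \<open>root = {} (layer V_0), toor = [n] (layer V_n).\<close>
definition toor :: "nat \<Rightarrow> nat set" where
  "toor n = {1..n}"

text \<open>Operation counts of the procedure.
 (i) one division per entry (i,j), j ~= t;
 (ii) one multiplication per edge not leaving the root and not entering V_t;
      at each non-root vertex v, (indegree v - 1) additions;
 (iii) one multiplication per factor a_1t, ..., a_nt.\<close>
definition mult_div_count :: "nat \<Rightarrow> nat \<Rightarrow> nat" where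
  "mult_div_count n t =
     card {(i, j). i \<in> {1..n} \<and> j \<in> {1..n} \<and> j \<noteq> t}
   + card {e \<in> trellis_edges n. fst e \<noteq> {} \<and> snd e \<notin> trellis_layer n t}
   + card {1..n}"

definition add_count :: "nat \<Rightarrow> nat" where
  "add_count n = (\<Sum>v \<in> trellis_vertices n - {{}}. card {e \<in> trellis_edges n. snd e = v} - 1)"

end

theory Submission
  imports Defs
begin

text \<open>Dividing row i by a_it scales the permanent by a_it, and it turns every edge label
  entering layer t into 1. A root-to-v path of the trellis adds the elements of v one at a
  time, so the flow at v sums, over all orderings of v, the products of the labels along
  the path; at the toor these are exactly the permutation terms of the permanent.
  For the counts, every vertex v has exactly |v| incoming edges, so layer k receives
  k C(n,k) edges and summing gives n 2^(n-1) edges; removing the edges into layers 1 and t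
  (with t C(n,t) = \<lceil>n/2\<rceil> C(n, \<lfloor>n/2\<rfloor>)) gives the multiplication count, and
  the additions are n 2^(n-1) minus the 2^n - 1 non-root vertices.\<close>

lemma trellis_edges_into:
  assumes "v \<subseteq> {1..n}"
  shows "{e \<in> trellis_edges n. snd e = v} = (\<lambda>i. (v - {i}, v)) ` v"
proof (intro equalityI subsetI)
  fix e assume e: "e \<in> {e \<in> trellis_edges n. snd e = v}"
  then obtain u where uv: "e = (u, v)" "u \<subset> v" "card v = Suc (card u)" "finite v"
    using assms finite_subset by (cases e) (auto simp: trellis_edges_def)
  then have "card (v - u) = 1" using card_Diff_subset[of u v] finite_subset[of u v] by auto
  then obtain i where "v - u = {i}" by (auto simp: card_Suc_eq)
  with uv show "e \<in> (\<lambda>i. (v - {i}, v)) ` v" by blast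
next
  fix e assume "e \<in> (\<lambda>i. (v - {i}, v)) ` v"
  then obtain i where "i \<in> v" "e = (v - {i}, v)" by auto
  moreover have "finite v" using assms finite_subset by blast
  ultimately show "e \<in> {e \<in> trellis_edges n. snd e = v}"
    using assms card_Suc_Diff1[of v i] by (auto simp: trellis_edges_def)
qed

lemma card_trellis_edges_into:
  "v \<subseteq> {1..n} \<Longrightarrow> card {e \<in> trellis_edges n. snd e = v} = card v"
  by (simp add: trellis_edges_into) (rule card_image, auto simp: inj_on_def)

lemma edge_index_remove: "i \<in> v \<Longrightarrow> edge_index (v - {i}, v) = i"
  by (simp add: edge_index_def Diff_Diff_Int)

lemma flow_at_Suc_eq:
  assumes "v \<subseteq> {1..n}"
  shows "flow_at n B (Suc j) v = (\<Sum>i\<in>v. B i (card v) * flow_at n B j (v - {i}))"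
  using assms
  by (simp add: trellis_edges_into, subst sum.reindex)
    (auto simp: inj_on_def trellis_label_def edge_index_remove)

text \<open>The root-to-v paths of the trellis correspond to the orderings f of v: the k-th edge
  adds the element f k; f is the identity outside {1..j} so that each path gives one function.\<close>
definition orderings :: "nat \<Rightarrow> nat set \<Rightarrow> (nat \<Rightarrow> nat) set" where
  "orderings j v = {f. bij_betw f {1..j} v \<and> (\<forall>k. k \<notin> {1..j} \<longrightarrow> f k = k)}"

lemma orderings_0: "orderings 0 v = (if v = {} then {id} else {})"
  by (auto simp: orderings_def bij_betw_def)

lemma orderings_Suc:
  "orderings (Suc j) v = (\<Union>i\<in>v. (\<lambda>g. g(Suc j := i)) ` orderings j (v - {i}))"
proof (intro equalityI subsetI)
  fix f assume "f \<in> orderings (Suc j) v"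
  then have f: "bij_betw f {1..Suc j} v" "\<forall>k. k \<notin> {1..Suc j} \<longrightarrow> f k = k"
    by (auto simp: orderings_def)
  define i where "i = f (Suc j)"
  define g where "g = f(Suc j := Suc j)"
  have "i \<in> v" using bij_betw_apply[OF f(1), of "Suc j"] unfolding i_def by simp
  have "bij_betw f {Suc j} {i}" by (simp add: i_def)
  then have "bij_betw f ({1..Suc j} - {Suc j}) (v - {i})"
    by (rule bij_betw_DiffI[OF f(1)]) (use \<open>i \<in> v\<close> in auto)
  moreover have "{1..Suc j} - {Suc j} = {1..j}" by auto
  ultimately have "bij_betw g {1..j} (v - {i})"
    by (auto simp: g_def intro: bij_betw_cong[THEN iffD1, rotated])
  with f(2) have "g \<in> orderings j (v - {i})" by (auto simp: orderings_def g_def)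
  moreover have "f = g(Suc j := i)" by (auto simp: g_def i_def)
  ultimately show "f \<in> (\<Union>i\<in>v. (\<lambda>g. g(Suc j := i)) ` orderings j (v - {i}))"
    using \<open>i \<in> v\<close> by blast
next
  fix f assume "f \<in> (\<Union>i\<in>v. (\<lambda>g. g(Suc j := i)) ` orderings j (v - {i}))"
  then obtain i g where "i \<in> v" and f_def: "f = g(Suc j := i)"
    and g: "bij_betw g {1..j} (v - {i})" "\<forall>k. k \<notin> {1..j} \<longrightarrow> g k = k"
    by (auto simp: orderings_def)
  have f: "bij_betw f {1..j} (v - {i})" "f (Suc j) = i"
      "\<forall>k. k \<notin> {1..Suc j} \<longrightarrow> f k = k"
    using g by (auto simp: f_def intro: bij_betw_cong[THEN iffD1, rotated])
  have "bij_betw f ({1..j} \<union> {Suc j}) ((v - {i}) \<union> {i})"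
    by (rule bij_betw_combine[OF f(1)]) (auto simp: f(2))
  moreover have "{1..j} \<union> {Suc j} = {1..Suc j}" "(v - {i}) \<union> {i} = v" using \<open>i \<in> v\<close> by auto
  ultimately show "f \<in> orderings (Suc j) v" using f(3) by (simp add: orderings_def)
qed

lemma finite_orderings: "finite v \<Longrightarrow> finite (orderings j v)"
  by (induction j arbitrary: v) (simp_all add: orderings_0 orderings_Suc)

lemma sum_orderings_Suc:
  fixes B :: "nat \<Rightarrow> nat \<Rightarrow> 'a::comm_semiring_1"
  assumes "finite v"
  shows "(\<Sum>f\<in>orderings (Suc j) v. \<Prod>k=1..Suc j. B (f k) k)
       = (\<Sum>i\<in>v. B i (Suc j) * (\<Sum>g\<in>orderings j (v - {i}). \<Prod>k=1..j. B (g k) k))"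
proof -
  have inj: "inj_on (\<lambda>g. g(Suc j := i)) (orderings j w)" for i w
  proof (rule inj_onI)
    fix g g' assume "g \<in> orderings j w" "g' \<in> orderings j w" "g(Suc j := i) = g'(Suc j := i)"
    moreover from this have "g (Suc j) = g' (Suc j)" by (simp add: orderings_def)
    ultimately show "g = g'" by (metis fun_upd_triv fun_upd_upd)
  qed
  have disjoint: "(\<lambda>g. g(Suc j := i)) ` orderings j (v - {i})
      \<inter> (\<lambda>g. g(Suc j := i')) ` orderings j (v - {i'}) = {}" if "i \<noteq> i'" for i i'
    using that by (auto dest!: fun_cong[where x = "Suc j"])
  have "(\<Sum>f\<in>orderings (Suc j) v. \<Prod>k=1..Suc j. B (f k) k)
      = (\<Sum>i\<in>v. \<Sum>g\<in>orderings j (v - {i}). \<Prod>k=1..Suc j. B ((g(Suc j := i)) k) k)"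
    unfolding orderings_Suc
    by (subst sum.UNION_disjoint)
      (use assms disjoint in \<open>auto simp: finite_orderings sum.reindex[OF inj]\<close>)
  also have "\<dots> = (\<Sum>i\<in>v. \<Sum>g\<in>orderings j (v - {i}). B i (Suc j) * (\<Prod>k=1..j. B (g k) k))"
  proof (intro sum.cong refl)
    fix i g
    have "(\<Prod>k=1..j. B ((g(Suc j := i)) k) k) = (\<Prod>k=1..j. B (g k) k)"
      by (rule prod.cong) auto
    then show "(\<Prod>k=1..Suc j. B ((g(Suc j := i)) k) k) = B i (Suc j) * (\<Prod>k=1..j. B (g k) k)"
      by (simp add: prod.cl_ivl_Suc mult.commute)
  qed
  finally show ?thesis by (simp add: sum_distrib_left)
qed

lemma flow_at_eq_sum_orderings:
  "v \<subseteq> {1..n} \<Longrightarrow> card v = j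
    \<Longrightarrow> flow_at n B j v = (\<Sum>f\<in>orderings j v. \<Prod>k=1..j. B (f k) k)"
proof (induction j arbitrary: v)
  case 0
  then have "v = {}" using finite_subset by fastforce
  then show ?case by (simp add: orderings_0)
next
  case (Suc j)
  have "finite v" using Suc.prems(1) finite_subset by blast
  have IH: "flow_at n B j (v - {i}) = (\<Sum>g\<in>orderings j (v - {i}). \<Prod>k=1..j. B (g k) k)"
    if "i \<in> v" for i
    using that Suc.prems \<open>finite v\<close> by (intro Suc.IH) auto
  have "flow_at n B (Suc j) v = (\<Sum>i\<in>v. B i (Suc j) * flow_at n B j (v - {i}))"
    using flow_at_Suc_eq[OF Suc.prems(1)] Suc.prems(2) by simp
  also have "\<dots> = (\<Sum>f\<in>orderings (Suc j) v. \<Prod>k=1..Suc j. B (f k) k)"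
    unfolding sum_orderings_Suc[OF \<open>finite v\<close>] by (intro sum.cong refl) (simp add: IH)
  finally show ?case .
qed

lemma orderings_interval: "orderings n {1..n} = {p. p permutes {1..n}}"
  by (auto simp: orderings_def intro: bij_imp_permutes permutes_imp_bij permutes_not_in)

lemma mu_toor_eq_per: "mu n B (toor n) = per n B"
proof -
  have "mu n B (toor n) = (\<Sum>f\<in>orderings n {1..n}. \<Prod>k=1..n. B (f k) k)"
    using flow_at_eq_sum_orderings[of "{1..n}" n n B] by (simp add: mu_def toor_def)
  also have "\<dots> = (\<Sum>p | p permutes {1..n}. \<Prod>k=1..n. B (p k) k)"
    unfolding orderings_interval ..
  also have "\<dots> = (\<Sum>p | p permutes {1..n}. \<Prod>i=1..n. B i (inv p i))"
  proof (rule sum.cong[OF refl])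
    fix p assume "p \<in> {p. p permutes {1..n}}"
    then have p: "p permutes {1..n}" by simp
    have "(\<Prod>i=1..n. B i (inv p i)) = (\<Prod>i=1..n. B (p (inv p i)) (inv p i))"
      by (simp add: permutes_inverses[OF p])
    also have "\<dots> = (\<Prod>k=1..n. B (p k) k)"
      by (rule prod.reindex_bij_betw[OF permutes_imp_bij[OF permutes_inv[OF p]]])
    finally show "(\<Prod>k=1..n. B (p k) k) = (\<Prod>i=1..n. B i (inv p i))" by simp
  qed
  also have "\<dots> = per n B"
    unfolding per_def by (rule sum_permutations_inverse[symmetric])
  finally show ?thesis .
qed

lemma per_scale_rows: "per n (\<lambda>i j. c i * B i j) = (\<Prod>i=1..n. c i) * per n B"
  by (simp add: per_def sum_distrib_left prod.distrib)

lemma per_eq_col_normalize: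
  assumes "\<forall>i \<in> {1..n}. A i t \<noteq> 0"
  shows "per n A = (\<Prod>i=1..n. A i t) * per n (col_normalize A t)"
proof -
  have "per n A = per n (\<lambda>i j. A i t * col_normalize A t i j)"
    unfolding per_def col_normalize_def
    by (intro sum.cong prod.cong refl) (simp add: assms)
  then show ?thesis by (simp add: per_scale_rows)
qed

lemma trellis_label_col_normalize_layer:
  assumes "\<forall>i \<in> {1..n}. A i t \<noteq> 0"
    and "e \<in> trellis_edges n" and "snd e \<in> trellis_layer n t"
  shows "trellis_label (col_normalize A t) e = 1"
proof -
  obtain v where v: "snd e = v" "v \<subseteq> {1..n}" "card v = t"
    using assms(3) by (auto simp: trellis_layer_def)
  then obtain i where "i \<in> v" "e = (v - {i}, v)"
    using assms(2) trellis_edges_into[OF v(2)] by blast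
  with v assms(1) show ?thesis
    by (auto simp: trellis_label_def col_normalize_def edge_index_remove)
qed

lemma sum_card_subsets_filter:
  "(\<Sum>v | v \<subseteq> {1..n} \<and> P (card v). card v) = (\<Sum>k | k \<le> n \<and> P k. k * (n choose k))"
proof -
  let ?S = "{v. v \<subseteq> {1..n} \<and> P (card v)}"
  have "card ` ?S \<subseteq> {k. k \<le> n \<and> P k}"
  proof
    fix k assume "k \<in> card ` ?S"
    then obtain v where "v \<subseteq> {1..n}" "P (card v)" "k = card v" by blast
    then show "k \<in> {k. k \<le> n \<and> P k}" using card_mono[of "{1..n}" v] by simp
  qed
  then have "(\<Sum>v\<in>?S. card v) = (\<Sum>k | k \<le> n \<and> P k. \<Sum>v | v \<in> ?S \<and> card v = k. card v)"
    by (intro sum.group[symmetric]) (auto intro: finite_subset[of _ "Pow {1..n}"])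
  also have "\<dots> = (\<Sum>k | k \<le> n \<and> P k. k * card {v. v \<subseteq> {1..n} \<and> card v = k})"
  proof (intro sum.cong refl)
    fix k assume "k \<in> {k. k \<le> n \<and> P k}"
    then have "{v. v \<in> ?S \<and> card v = k} = {v. v \<subseteq> {1..n} \<and> card v = k}" by auto
    then show "(\<Sum>v | v \<in> ?S \<and> card v = k. card v) = k * card {v. v \<subseteq> {1..n} \<and> card v = k}"
      using sum.cong[of "{v. v \<in> ?S \<and> card v = k}" _ card "\<lambda>_. k"] by simp
  qed
  finally show ?thesis by (simp add: n_subsets)
qed

lemma sum_card_subsets: "(\<Sum>v | v \<subseteq> {1..n}. card v) = n * 2 ^ (n - 1)"
  using sum_card_subsets_filter[of n "\<lambda>_. True"] by (simp add: atMost_def[symmetric] choose_linear_sum)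

lemma card_trellis_edges_filter:
  "card {e \<in> trellis_edges n. P (card (snd e))} = (\<Sum>v | v \<subseteq> {1..n} \<and> P (card v). card v)"
proof -
  let ?S = "{v. v \<subseteq> {1..n} \<and> P (card v)}"
  have eq: "{e \<in> trellis_edges n. P (card (snd e))} = (\<Union>v\<in>?S. {e \<in> trellis_edges n. snd e = v})"
  proof (intro equalityI subsetI)
    fix e assume "e \<in> {e \<in> trellis_edges n. P (card (snd e))}"
    moreover from this have "snd e \<subseteq> {1..n}" by (cases e) (simp add: trellis_edges_def)
    ultimately show "e \<in> (\<Union>v\<in>?S. {e \<in> trellis_edges n. snd e = v})" by blast
  qed auto
  have "finite (trellis_edges n)"
    by (rule finite_subset[of _ "Pow {1..n} \<times> Pow {1..n}"]) (auto simp: trellis_edges_def)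
  then have "card {e \<in> trellis_edges n. P (card (snd e))}
      = (\<Sum>v\<in>?S. card {e \<in> trellis_edges n. snd e = v})"
    unfolding eq by (intro card_UN_disjoint) (auto intro: finite_subset[of _ "Pow {1..n}"])
  also have "\<dots> = (\<Sum>v\<in>?S. card v)"
    by (intro sum.cong refl) (simp add: card_trellis_edges_into)
  finally show ?thesis .
qed

lemma add_count_plus_two_power: "add_count n + 2 ^ n = n * 2 ^ (n - 1) + 1"
proof -
  let ?V = "{v. v \<subseteq> {1..n}}"
  let ?W = "?V - {{}}"
  have fin: "finite ?V" by (rule finite_subset[of _ "Pow {1..n}"]) auto
  have "add_count n = (\<Sum>v\<in>?W. card v - 1)"
    unfolding add_count_def trellis_vertices_def
    by (intro sum.cong refl) (simp add: card_trellis_edges_into)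
  moreover have "(\<Sum>v\<in>?W. card v - 1) + card ?W = (\<Sum>v\<in>?W. card v)"
  proof -
    have "card v - 1 + 1 = card v" if "v \<in> ?W" for v
      using that finite_subset[of v "{1..n}"] by (simp add: Suc_leI card_gt_0_iff)
    then have "(\<Sum>v\<in>?W. card v - 1 + 1) = (\<Sum>v\<in>?W. card v)"
      by (rule sum.cong[OF refl])
    moreover have "(\<Sum>v\<in>?W. card v - 1 + 1) = (\<Sum>v\<in>?W. card v - 1) + card ?W"
      by (simp only: sum.distrib sum_constant mult_1_right of_nat_id)
    ultimately show ?thesis by simp
  qed
  moreover have "(\<Sum>v\<in>?W. card v) = (\<Sum>v\<in>?V. card v)"
    using sum.remove[OF fin, of "{}" card] by simp
  moreover have "card ?W = 2 ^ n - 1"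
    using fin card_Pow[of "{1..n}"] by (simp add: Pow_def card_Diff_singleton)
  moreover have "0 < (2::nat) ^ n" by simp
  ultimately show ?thesis
    using sum_card_subsets[of n] by linarith
qed

lemma card_trellis_edges_counted:
  "card {e \<in> trellis_edges n. fst e \<noteq> {} \<and> snd e \<notin> trellis_layer n t}
    = (\<Sum>k | k \<le> n \<and> k \<notin> {1, t}. k * (n choose k))"
proof -
  have "fst e \<noteq> {} \<and> snd e \<notin> trellis_layer n t \<longleftrightarrow> card (snd e) \<notin> {1, t}"
    if "e \<in> trellis_edges n" for e
  proof -
    obtain u v where e: "e = (u, v)" by (cases e)
    with that have "u \<subseteq> {1..n}" "v \<subseteq> {1..n}" "card v = Suc (card u)"
      by (auto simp: trellis_edges_def)
    moreover have "finite u" using \<open>u \<subseteq> {1..n}\<close> finite_subset by blast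
    ultimately show ?thesis using e by (auto simp: trellis_layer_def)
  qed
  then have "{e \<in> trellis_edges n. fst e \<noteq> {} \<and> snd e \<notin> trellis_layer n t}
      = {e \<in> trellis_edges n. card (snd e) \<notin> {1, t}}"
    by blast
  then show ?thesis
    using card_trellis_edges_filter[of n "\<lambda>k. k \<notin> {1, t}"]
      sum_card_subsets_filter[of n "\<lambda>k. k \<notin> {1, t}"]
    by simp
qed

lemma mult_div_count_plus:
  assumes "2 \<le> t" and "t \<le> n"
  shows "mult_div_count n t + t * (n choose t) = n * 2 ^ (n - 1) + n * (n - 1)"
proof -
  have "{(i, j). i \<in> {1..n} \<and> j \<in> {1..n} \<and> j \<noteq> t} = {1..n} \<times> ({1..n} - {t})" by auto
  then have pairs: "card {(i, j). i \<in> {1..n} \<and> j \<in> {1..n} \<and> j \<noteq> t} = n * (n - 1)"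
    using assms by (simp add: card_cartesian_product)
  let ?f = "\<lambda>k. k * (n choose k)"
  let ?R = "{k. k \<le> n \<and> k \<notin> {1, t}}"
  have "{..n} = insert 1 (insert t ?R)" using assms by auto
  moreover have "finite ?R" by simp
  ultimately have "(\<Sum>k\<le>n. ?f k) = ?f 1 + (?f t + (\<Sum>k\<in>?R. ?f k))"
    using assms by simp
  then have "n * 2 ^ (n - 1) = n + (t * (n choose t) + (\<Sum>k\<in>?R. ?f k))"
    by (simp add: choose_linear_sum)
  then show ?thesis
    unfolding mult_div_count_def pairs card_trellis_edges_counted by simp
qed

lemma Suc_times_choose_Suc: "Suc k * (n choose Suc k) = (n - k) * (n choose k)"
  by (simp only: binomial_absorption binomial_absorb_comp)

lemma ceiling_half: "\<lceil>real n / 2\<rceil> = int (n - n div 2)"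
proof (cases "even n")
  case True
  then show ?thesis by (auto elim!: evenE)
next
  case False
  then obtain m where n: "n = 2 * m + 1" using oddE by blast
  then have "real n / 2 = real m + 1 / 2" by simp
  moreover have "\<lceil>real m + 1 / 2\<rceil> = int m + 1" by (rule ceiling_unique) auto
  moreover have "n - n div 2 = m + 1" using n by simp
  ultimately show ?thesis by (simp only: of_nat_add of_nat_1)
qed

lemma int_add_count:
  assumes "1 \<le> n"
  shows "int (add_count n) = (int n - 2) * 2 ^ (n - 1) + 1"
proof -
  have "(2::int) ^ n = 2 * 2 ^ (n - 1)"
    using assms by (simp flip: power_Suc)
  moreover have "int (add_count n) + 2 ^ n = int n * 2 ^ (n - 1) + 1"
    using arg_cong[OF add_count_plus_two_power, of int n] by simp
  ultimately show ?thesis by (simp add: algebra_simps)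
qed

lemma int_mult_div_count_middle:
  assumes "2 \<le> n" and t: "t = n div 2 + 1"
  shows "int (mult_div_count n t)
    = int (n * 2 ^ (n - 1)) - \<lceil>real n / 2\<rceil> * int (n choose (n div 2)) + int (n ^ 2) - int n"
proof -
  have "mult_div_count n t + t * (n choose t) = n * 2 ^ (n - 1) + n * (n - 1)"
    using assms by (intro mult_div_count_plus) auto
  then have "int (mult_div_count n t) + int (t * (n choose t)) = int (n * 2 ^ (n - 1)) + int (n * (n - 1))"
    by (simp only: of_nat_add[symmetric])
  moreover have "t * (n choose t) = (n - n div 2) * (n choose (n div 2))"
    unfolding t using Suc_times_choose_Suc[of "n div 2" n] by simp
  then have "\<lceil>real n / 2\<rceil> * int (n choose (n div 2)) = int (t * (n choose t))"
    by (simp add: ceiling_half)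
  moreover have "int (n * (n - 1)) = int (n ^ 2) - int n"
    using assms by (simp add: power2_eq_square of_nat_diff algebra_simps)
  ultimately show ?thesis by linarith
qed

theorem theorem4:
  fixes n :: nat and A :: "nat \<Rightarrow> nat \<Rightarrow> 'a::field" and t :: nat
  assumes "n \<ge> 2"
    and "t = n div 2 + 1"
    and "\<forall>i \<in> {1..n}. A i t \<noteq> 0"
  shows "per n A = (\<Prod>i=1..n. A i t) * per n (col_normalize A t)
    \<and> mu n (col_normalize A t) (toor n) = per n (col_normalize A t)
    \<and> per n A = (\<Prod>i=1..n. A i t) * mu n (col_normalize A t) (toor n)
    \<and> (\<forall>e \<in> trellis_edges n. snd e \<in> trellis_layer n t \<longrightarrow> trellis_label (col_normalize A t) e = 1)
    \<and> int (mult_div_count n t)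
        = int (n * 2 ^ (n - 1)) - \<lceil>real n / 2\<rceil> * int (n choose (n div 2)) + int (n ^ 2) - int n
    \<and> int (add_count n) = (int n - 2) * 2 ^ (n - 1) + 1"
proof (intro conjI ballI impI)
  show "per n A = (\<Prod>i=1..n. A i t) * per n (col_normalize A t)"
    using assms(3) by (rule per_eq_col_normalize)
  show "mu n (col_normalize A t) (toor n) = per n (col_normalize A t)"
    by (rule mu_toor_eq_per)
  then show "per n A = (\<Prod>i=1..n. A i t) * mu n (col_normalize A t) (toor n)"
    using per_eq_col_normalize[of n A t] assms(3) by simp
  show "trellis_label (col_normalize A t) e = 1"
    if "e \<in> trellis_edges n" and "snd e \<in> trellis_layer n t" for e
    using assms(3) that by (rule trellis_label_col_normalize_layer)
  show "int (mult_div_count n t)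
      = int (n * 2 ^ (n - 1)) - \<lceil>real n / 2\<rceil> * int (n choose (n div 2)) + int (n ^ 2) - int n"
    using assms(1,2) by (rule int_mult_div_count_middle)
  show "int (add_count n) = (int n - 2) * 2 ^ (n - 1) + 1"
    using assms(1) by (intro int_add_count) simp
qed

end
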